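(* Let $(G,\varphi)$ be a complex unit gain graph, let $u$ be a pendant vertex of $G$ with neighbour $v$, and let $G_0=G-\{u,v\}$. Then $r(G,\varphi)=2|V(G)|-2c(G)-2\alpha(G)$ if and only if $v$ does not lie on any cycle of $G$ and $r(G_0,\varphi)=2|V(G_0)|-2c(G_0)-2\alpha(G_0)$.
   Context: A complex unit gain graph $(G,\varphi)$ is a simple finite graph $G$ with a gain function $\varphi$ assigning to each oriented edge $e_{ij}$ a complex number of modulus $1$ with $\varphi(e_{ji})=\overline{\varphi(e_{ij})}$; its adjacency matrix has $(i,j)$-entry $\varphi(e_{ij})$ for adjacent $v_i,v_j$ and $0$ otherwise, and $r(G,\varphi)$ is its rank; induced subgraphs carry the restricted gain. $\alpha$ is the independence number and $c(G)=|E(G)|-|V(G)|+\omega(G)$ the cyclomatic number ($\omega$ = number of components). A pendant vertex is a vertex of degree $1$. *)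

theory Defs
  imports "HOL-Analysis.Analysis" "HOL-Library.Function_Algebras"
begin

definition cug_graph :: "'a set \<Rightarrow> ('a \<Rightarrow> 'a \<Rightarrow> bool) \<Rightarrow> ('a \<Rightarrow> 'a \<Rightarrow> complex) \<Rightarrow> bool" where
  "cug_graph V E phi \<longleftrightarrow> finite V \<and>
     (\<forall>x y. E x y \<longrightarrow> x \<in> V \<and> y \<in> V \<and> x \<noteq> y \<and> E y x) \<and>
     (\<forall>x y. E x y \<longrightarrow> cmod (phi x y) = 1 \<and> phi y x = cnj (phi x y))"

definition induced :: "('a \<Rightarrow> 'a \<Rightarrow> bool) \<Rightarrow> 'a set \<Rightarrow> 'a \<Rightarrow> 'a \<Rightarrow> bool" where
  "induced E W = (\<lambda>x y. E x y \<and> x \<in> W \<and> y \<in> W)"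

definition cscale :: "complex \<Rightarrow> ('a \<Rightarrow> complex) \<Rightarrow> ('a \<Rightarrow> complex)" where
  "cscale c f = (\<lambda>x. c * f x)"

interpretation fun_cvs: vector_space "cscale :: complex \<Rightarrow> ('a \<Rightarrow> complex) \<Rightarrow> _"
  by unfold_locales (auto simp: cscale_def fun_eq_iff algebra_simps)

definition adj :: "('a \<Rightarrow> 'a \<Rightarrow> bool) \<Rightarrow> ('a \<Rightarrow> 'a \<Rightarrow> complex) \<Rightarrow> 'a \<Rightarrow> 'a \<Rightarrow> complex" where
  "adj E phi i j = (if E i j then phi i j else 0)"

definition adj_row :: "'a set \<Rightarrow> ('a \<Rightarrow> 'a \<Rightarrow> bool) \<Rightarrow> ('a \<Rightarrow> 'a \<Rightarrow> complex) \<Rightarrow> 'a \<Rightarrow> 'a \<Rightarrow> complex" where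
  "adj_row V E phi i = (\<lambda>j. if j \<in> V then adj E phi i j else 0)"

text \<open>Rank of the adjacency matrix = dimension of the complex span of its rows.\<close>
definition gain_rank :: "'a set \<Rightarrow> ('a \<Rightarrow> 'a \<Rightarrow> bool) \<Rightarrow> ('a \<Rightarrow> 'a \<Rightarrow> complex) \<Rightarrow> nat" where
  "gain_rank V E phi = fun_cvs.dim (adj_row V E phi ` V)"

definition independent_set :: "'a set \<Rightarrow> ('a \<Rightarrow> 'a \<Rightarrow> bool) \<Rightarrow> 'a set \<Rightarrow> bool" where
  "independent_set V E S \<longleftrightarrow> S \<subseteq> V \<and> (\<forall>x\<in>S. \<forall>y\<in>S. \<not> E x y)"

definition indep_num :: "'a set \<Rightarrow> ('a \<Rightarrow> 'a \<Rightarrow> bool) \<Rightarrow> nat" where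
  "indep_num V E = Max {card S | S. independent_set V E S}"

definition edge_set :: "'a set \<Rightarrow> ('a \<Rightarrow> 'a \<Rightarrow> bool) \<Rightarrow> 'a set set" where
  "edge_set V E = {{x, y} | x y. x \<in> V \<and> y \<in> V \<and> E x y}"

definition num_components :: "'a set \<Rightarrow> ('a \<Rightarrow> 'a \<Rightarrow> bool) \<Rightarrow> nat" where
  "num_components V E =
     card (V // {(x, y). x \<in> V \<and> y \<in> V \<and> (induced E V)\<^sup>*\<^sup>* x y})"

definition cyclomatic :: "'a set \<Rightarrow> ('a \<Rightarrow> 'a \<Rightarrow> bool) \<Rightarrow> int" where
  "cyclomatic V E = int (card (edge_set V E)) - int (card V) + int (num_components V E)"

definition pendant :: "'a set \<Rightarrow> ('a \<Rightarrow> 'a \<Rightarrow> bool) \<Rightarrow> 'a \<Rightarrow> bool" where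
  "pendant V E u \<longleftrightarrow> u \<in> V \<and> card {w \<in> V. E u w} = 1"

definition is_cycle :: "'a set \<Rightarrow> ('a \<Rightarrow> 'a \<Rightarrow> bool) \<Rightarrow> 'a list \<Rightarrow> bool" where
  "is_cycle V E xs \<longleftrightarrow> length xs \<ge> 3 \<and> distinct xs \<and> set xs \<subseteq> V \<and>
     (\<forall>i. Suc i < length xs \<longrightarrow> E (xs ! i) (xs ! Suc i)) \<and> E (last xs) (hd xs)"

definition on_cycle :: "'a set \<Rightarrow> ('a \<Rightarrow> 'a \<Rightarrow> bool) \<Rightarrow> 'a \<Rightarrow> bool" where
  "on_cycle V E v \<longleftrightarrow> (\<exists>xs. is_cycle V E xs \<and> v \<in> set xs)"

end

theory Submission
  imports Defs
begin

text \<open>Every graph with nonzero gains satisfies r(G) \<ge> 2|V| - 2c(G) - 2\<alpha>(G), by induction on |V|: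
  an end vertex x of a longest path lies on a cycle or has degree at most one. Deleting x lowers
  c by at least one if x is on a cycle, and lowers \<alpha> by one if x is isolated. Deleting a pendant
  vertex u together with its neighbour v lowers the rank by exactly 2 and \<alpha> by exactly 1, and
  lowers c by an amount that vanishes precisely when v lies on no cycle. Since G - {u, v} already
  satisfies the bound, these exact changes leave room for equality in G only if c does not drop,
  and then equality for G and equality for G - {u, v} are equivalent.\<close>

section \<open>Simple graphs, paths and cycles\<close>

definition simple_graph :: "'a set \<Rightarrow> ('a \<Rightarrow> 'a \<Rightarrow> bool) \<Rightarrow> bool" where
  "simple_graph V E \<longleftrightarrow> finite V \<and> (\<forall>x y. E x y \<longrightarrow> x \<in> V \<and> y \<in> V \<and> x \<noteq> y \<and> E y x)"

lemma simple_graphD: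
  assumes "simple_graph V E" "E x y"
  shows "x \<in> V" "y \<in> V" "x \<noteq> y" "E y x"
  using assms by (auto simp: simple_graph_def)

lemma simple_graph_finite: "simple_graph V E \<Longrightarrow> finite V"
  by (simp add: simple_graph_def)

lemma simple_graph_induced: "simple_graph V E \<Longrightarrow> W \<subseteq> V \<Longrightarrow> simple_graph W (induced E W)"
  by (auto simp: simple_graph_def induced_def intro: finite_subset)

lemma induced_induced: "induced (induced E W) W' = induced E (W \<inter> W')"
  by (auto simp: induced_def fun_eq_iff)

lemma induced_self: "simple_graph V E \<Longrightarrow> induced E V = E"
  by (auto simp: induced_def fun_eq_iff simple_graph_def)

lemma cug_graph_simple_graph: "cug_graph V E phi \<Longrightarrow> simple_graph V E"
  by (simp add: cug_graph_def simple_graph_def)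

lemma cug_graph_gain_nonzero: "cug_graph V E phi \<Longrightarrow> E a b \<Longrightarrow> phi a b \<noteq> 0"
  unfolding cug_graph_def by (metis norm_zero zero_neq_one)

lemma rtranclp_sym:
  assumes "simple_graph V E" "E\<^sup>*\<^sup>* a b"
  shows "E\<^sup>*\<^sup>* b a"
proof -
  have "symp E"
    using simple_graphD(4)[OF assms(1)] by (intro sympI)
  then show ?thesis
    using assms(2) by (blast dest: sympD[OF symp_rtranclp])
qed

lemma rtranclp_induced: "(induced E W)\<^sup>*\<^sup>* a b \<Longrightarrow> E\<^sup>*\<^sup>* a b"
  by (rule rtranclp_mono[THEN predicate2D, rotated]) (auto simp: induced_def)

definition is_path :: "'a set \<Rightarrow> ('a \<Rightarrow> 'a \<Rightarrow> bool) \<Rightarrow> 'a list \<Rightarrow> bool" where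
  "is_path V E ps \<longleftrightarrow> ps \<noteq> [] \<and> distinct ps \<and> set ps \<subseteq> V \<and> successively E ps"

lemma is_cycle_iff_path:
  "is_cycle V E xs \<longleftrightarrow> 3 \<le> length xs \<and> is_path V E xs \<and> E (last xs) (hd xs)"
  by (auto simp: is_cycle_def is_path_def successively_conv_nth)

lemma is_cycle_rotate1:
  assumes "is_cycle V E xs"
  shows "is_cycle V E (rotate1 xs)"
proof -
  obtain x ys where xs: "xs = x # ys" "ys \<noteq> []"
    using assms by (cases xs) (fastforce simp: is_cycle_iff_path)+
  show ?thesis
    using assms xs(2) unfolding xs is_cycle_iff_path is_path_def
    by (auto simp: successively_append_iff successively_Cons)
qed

lemma is_cycle_rotate: "is_cycle V E xs \<Longrightarrow> is_cycle V E (rotate n xs)"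
  by (induction n) (auto intro: is_cycle_rotate1)

lemma on_cycle_obtain_Cons:
  assumes "on_cycle V E x"
  obtains ys where "is_cycle V E (x # ys)"
proof -
  obtain xs where xs: "is_cycle V E xs" "x \<in> set xs"
    using assms by (auto simp: on_cycle_def)
  then obtain i where i: "i < length xs" "xs ! i = x"
    by (metis in_set_conv_nth)
  moreover have "xs \<noteq> []"
    using i by auto
  ultimately have "hd (rotate i xs) = x"
    by (simp add: hd_rotate_conv_nth)
  moreover have "rotate i xs \<noteq> []"
    using \<open>xs \<noteq> []\<close> by simp
  ultimately have "rotate i xs = x # tl (rotate i xs)"
    by (metis list.collapse)
  then show thesis
    using that is_cycle_rotate[OF xs(1)] by metis
qed

lemma is_cycle_induced_iff:
  assumes "W \<subseteq> V"
  shows "is_cycle W (induced E W) xs \<longleftrightarrow> is_cycle V E xs \<and> set xs \<subseteq> W"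
proof -
  have "successively (induced E W) xs \<longleftrightarrow> successively E xs" if "set xs \<subseteq> W"
    using that by (intro successively_cong) (auto simp: induced_def)
  moreover have "xs \<noteq> [] \<Longrightarrow> set xs \<subseteq> W \<Longrightarrow> hd xs \<in> W \<and> last xs \<in> W"
    by auto
  ultimately show ?thesis
    using assms by (auto simp: is_cycle_iff_path is_path_def induced_def)
qed

lemma successively_rtranclp: "successively E ps \<Longrightarrow> ps \<noteq> [] \<Longrightarrow> E\<^sup>*\<^sup>* (hd ps) (last ps)"
proof (induction ps)
  case (Cons x xs)
  then show ?case
    by (cases xs) (auto simp: successively_Cons intro: converse_rtranclp_into_rtranclp)
qed simp

lemma successively_induced_subset:
  "successively (induced E W) ps \<Longrightarrow> ps \<noteq> [] \<Longrightarrow> hd ps \<in> W \<Longrightarrow> set ps \<subseteq> W"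
proof (induction ps)
  case (Cons x xs)
  then show ?case
    by (cases xs) (auto simp: successively_Cons induced_def)
qed simp

lemma rtranclp_obtain_path:
  assumes "E\<^sup>*\<^sup>* a b"
  obtains ps where "ps \<noteq> []" "hd ps = a" "last ps = b" "distinct ps" "successively E ps"
  using assms
proof (induction arbitrary: thesis rule: converse_rtranclp_induct)
  case base
  then show ?case
    by (metis distinct_singleton last.simps list.distinct(1) list.sel(1) successively.simps(2))
next
  case (step a c)
  obtain ps where ps: "ps \<noteq> []" "hd ps = c" "last ps = b" "distinct ps" "successively E ps"
    using step.IH by blast
  show ?case
  proof (cases "a \<in> set ps")
    case True
    \<comment> \<open>cut the walk short at the later visit of a\<close>
    then obtain j where "j < length ps" "ps ! j = a"
      by (metis in_set_conv_nth)
    then show ?thesis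
      using ps step.prems[of "drop j ps"]
      by (auto simp: hd_drop_conv_nth successively_conv_nth)
  next
    case False
    then show ?thesis
      using ps step.prems[of "a # ps"] step.hyps(1) by (auto simp: successively_Cons)
  qed
qed

lemma longest_path_exists:
  assumes "finite V" "V \<noteq> {}"
  shows "\<exists>ps. is_path V E ps \<and> (\<forall>qs. is_path V E qs \<longrightarrow> length qs \<le> length ps)"
proof -
  obtain a where "a \<in> V"
    using assms(2) by blast
  then have "is_path V E [a]"
    by (simp add: is_path_def)
  moreover have "length qs < Suc (card V)" if "is_path V E qs" for qs
  proof -
    have "length qs = card (set qs)" "set qs \<subseteq> V"
      using that by (simp_all add: is_path_def distinct_card)
    moreover have "card (set qs) \<le> card V"
      using card_mono[OF assms(1) \<open>set qs \<subseteq> V\<close>] .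
    ultimately show ?thesis
      by simp
  qed
  ultimately show ?thesis
    using ex_has_greatest_nat[of "is_path V E" "[a]" length "Suc (card V)"] by blast
qed

lemma on_cycle_if_chord:
  assumes G: "simple_graph V E" and ps: "is_path V E ps"
    and j: "2 \<le> j" "j < length ps" and chord: "E (hd ps) (ps ! j)"
  shows "on_cycle V E (hd ps)"
proof -
  let ?xs = "take (Suc j) ps"
  have xs: "?xs = take j ps @ [ps ! j]"
    using j(2) by (rule take_Suc_conv_app_nth)
  have "is_path V E ?xs"
    using ps set_take_subset[of "Suc j" ps] by (auto simp: is_path_def successively_conv_nth)
  moreover have "hd ?xs = hd ps" "3 \<le> length ?xs"
    using j by simp_all
  moreover have "last ?xs = ps ! j"
    by (simp add: xs)
  ultimately have "is_cycle V E ?xs"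
    using simple_graphD(4)[OF G chord] by (simp add: is_cycle_iff_path)
  moreover have "hd ps \<in> set ?xs"
    using \<open>hd ?xs = hd ps\<close> \<open>3 \<le> length ?xs\<close> by (metis hd_in_set list.size(3) not_numeral_le_zero)
  ultimately show ?thesis
    by (auto simp: on_cycle_def)
qed

lemma longest_path_neighbour_in_set:
  assumes G: "simple_graph V E" and ps: "is_path V E ps"
    and longest: "\<And>qs. is_path V E qs \<Longrightarrow> length qs \<le> length ps" and "E (hd ps) w"
  shows "w \<in> set ps"
proof (rule ccontr)
  assume "w \<notin> set ps"
  then have "is_path V E (w # ps)"
    using ps simple_graphD[OF G assms(4)] by (auto simp: is_path_def successively_Cons)
  then show False
    using longest[of "w # ps"] by simp
qed

text \<open>Of two neighbours of the first vertex of a longest path, both on the path, one is not the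
  second vertex and so closes a cycle.\<close>

lemma vertex_on_cycle_or_degree_le_1:
  assumes G: "simple_graph V E" and "V \<noteq> {}"
  obtains x where "x \<in> V" "on_cycle V E x \<or> card {w \<in> V. E x w} \<le> 1"
proof -
  obtain ps where ps: "is_path V E ps" and longest: "\<And>qs. is_path V E qs \<Longrightarrow> length qs \<le> length ps"
    using longest_path_exists[OF simple_graph_finite[OF G] assms(2), of E] by blast
  define a where "a = hd ps"
  have a: "a \<in> V" "ps ! 0 = a"
    using ps by (auto simp: is_path_def a_def hd_conv_nth)
  have on_path: "w \<in> set ps" if "E a w" for w
    using longest_path_neighbour_in_set[OF G ps longest] that by (simp add: a_def)
  show thesis
  proof (cases "card {w \<in> V. E a w} \<le> 1")
    case True
    then show thesis
      using that a by blast
  next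
    case False
    then obtain w1 w2 where w: "E a w1" "E a w2" "w1 \<noteq> w2"
      using card_le_Suc0_iff_eq[of "{w \<in> V. E a w}"] simple_graph_finite[OF G] by auto
    obtain j1 j2 where j: "j1 < length ps" "ps ! j1 = w1" "j2 < length ps" "ps ! j2 = w2"
      using on_path[OF w(1)] on_path[OF w(2)] by (metis in_set_conv_nth)
    moreover have "w1 \<noteq> a" "w2 \<noteq> a"
      using w simple_graphD(3)[OF G] by blast+
    ultimately have "j1 \<noteq> 0" "j2 \<noteq> 0" "j1 \<noteq> j2"
      using w(3) a(2) by metis+
    then have "2 \<le> j1 \<or> 2 \<le> j2"
      by linarith
    then obtain j where "2 \<le> j" "j < length ps" "E a (ps ! j)"
      using j w by blast
    then have "on_cycle V E a"
      using on_cycle_if_chord[OF G ps] by (simp add: a_def)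
    then show thesis
      using that a by blast
  qed
qed

section \<open>Deleting a vertex: components and cyclomatic number\<close>

definition graph_component :: "'a set \<Rightarrow> ('a \<Rightarrow> 'a \<Rightarrow> bool) \<Rightarrow> 'a \<Rightarrow> 'a set" where
  "graph_component V E a = {b \<in> V. E\<^sup>*\<^sup>* a b}"

lemma num_components_eq_card_graph_components:
  assumes "simple_graph V E"
  shows "num_components V E = card (graph_component V E ` V)"
proof -
  have "V // {(a, b). a \<in> V \<and> b \<in> V \<and> (induced E V)\<^sup>*\<^sup>* a b} = graph_component V E ` V"
    unfolding quotient_def graph_component_def induced_self[OF assms] by auto
  then show ?thesis
    by (simp add: num_components_def)
qed

lemma graph_component_eq:
  assumes "simple_graph V E" "E\<^sup>*\<^sup>* a b"
  shows "graph_component V E a = graph_component V E b"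
  using assms(2) rtranclp_sym[OF assms] unfolding graph_component_def
  by (auto intro: rtranclp_trans)

lemma cyclomatic_empty: "cyclomatic {} E = 0"
  by (simp add: cyclomatic_def edge_set_def num_components_def quotient_def)

locale vertex_deletion =
  fixes V :: "'a set" and E :: "'a \<Rightarrow> 'a \<Rightarrow> bool" and x :: 'a
  assumes graph: "simple_graph V E" and vertex: "x \<in> V"
begin

abbreviation "V' \<equiv> V - {x}"
abbreviation "E' \<equiv> induced E (V - {x})"
abbreviation "N \<equiv> {w \<in> V. E x w}"
abbreviation "C \<equiv> graph_component V E"
abbreviation "C' \<equiv> graph_component (V - {x}) (induced E (V - {x}))"

lemma simple_graph_delete: "simple_graph V' E'"
  using simple_graph_induced[OF graph] by blast

lemma card_delete_vertex: "card V = card V' + 1"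
  using card_Suc_Diff1[OF simple_graph_finite[OF graph] vertex] by simp

lemma neighbours_subset: "N \<subseteq> V'"
  using graph by (auto dest: simple_graphD)

lemma on_cycle_iff_neighbours_connected:
  "on_cycle V E x \<longleftrightarrow> (\<exists>y\<in>N. \<exists>z\<in>N. y \<noteq> z \<and> E'\<^sup>*\<^sup>* y z)"
proof
  assume "on_cycle V E x"
  then obtain ys where cyc: "is_cycle V E (x # ys)"
    by (rule on_cycle_obtain_Cons)
  then obtain a b rest where ys: "ys = a # b # rest"
    by (cases ys rule: remdups_adj.cases) (auto simp: is_cycle_def)
  have path: "distinct (x # ys)" "set ys \<subseteq> V'" "successively E ys"
    using cyc by (auto simp: is_cycle_iff_path is_path_def successively_Cons)
  then have "successively E' ys"
    by (auto simp: induced_def intro: successively_mono)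
  then have "E'\<^sup>*\<^sup>* a (last ys)"
    using successively_rtranclp[of E' ys] ys by simp
  moreover have "a \<in> N" "last ys \<in> N"
    using cyc graph ys by (auto simp: is_cycle_iff_path is_path_def dest: simple_graphD)
  moreover have "a \<noteq> last ys"
    using path(1) last_in_set[of "b # rest"] ys by auto
  ultimately show "\<exists>y\<in>N. \<exists>z\<in>N. y \<noteq> z \<and> E'\<^sup>*\<^sup>* y z"
    by blast
next
  assume "\<exists>y\<in>N. \<exists>z\<in>N. y \<noteq> z \<and> E'\<^sup>*\<^sup>* y z"
  then obtain y z where yz: "y \<in> N" "z \<in> N" "y \<noteq> z" "E'\<^sup>*\<^sup>* y z"
    by blast
  obtain ps where ps: "ps \<noteq> []" "hd ps = y" "last ps = z" "distinct ps" "successively E' ps"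
    using yz(4) by (rule rtranclp_obtain_path)
  have "set ps \<subseteq> V'"
    using successively_induced_subset[OF ps(5,1)] ps(2) yz(1) neighbours_subset by auto
  moreover have "2 \<le> length ps"
    using ps yz(3) by (cases ps rule: remdups_adj.cases) auto
  moreover have "successively E ps"
    using ps(5) by (rule successively_mono) (simp add: induced_def)
  ultimately have "is_cycle V E (x # ps)"
    using ps yz vertex simple_graphD(4)[OF graph, of x z]
    by (auto simp: is_cycle_iff_path is_path_def successively_Cons)
  then show "on_cycle V E x"
    by (auto simp: on_cycle_def)
qed

lemma not_on_cycle_if_degree_le_1: "card N \<le> 1 \<Longrightarrow> \<not> on_cycle V E x"
  using simple_graph_finite[OF graph]
  by (auto simp: on_cycle_iff_neighbours_connected card_le_Suc0_iff_eq)

lemma degree_le_1_cases: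
  assumes "card N \<le> 1"
  obtains "N = {}" | y where "E x y" "\<And>w. E x w \<Longrightarrow> w = y"
proof (cases "card N = 1")
  case True
  then obtain y where "N = {y}"
    by (rule card_1_singletonE)
  then have "E x y" "\<And>w. E x w \<Longrightarrow> w = y"
    using simple_graphD(2)[OF graph] by blast+
  then show thesis
    by (rule that(2))
next
  case False
  then have "card N = 0"
    using assms by linarith
  then have "N = {}"
    using simple_graph_finite[OF graph] by simp
  then show thesis
    by (rule that(1))
qed

lemma rtranclp_avoids_or_reaches_neighbour:
  assumes "a \<in> V'" "E\<^sup>*\<^sup>* a b"
  shows "(\<exists>y\<in>N. E'\<^sup>*\<^sup>* a y) \<or> (b \<noteq> x \<and> E'\<^sup>*\<^sup>* a b)"
  using assms(2)
proof (induction rule: rtranclp_induct)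
  case base
  then show ?case
    using assms(1) by auto
next
  case (step b c)
  show ?case
  proof (cases "\<exists>y\<in>N. E'\<^sup>*\<^sup>* a y")
    case False
    then have b: "b \<noteq> x" "E'\<^sup>*\<^sup>* a b"
      using step.IH by auto
    show ?thesis
    proof (cases "c = x")
      case True
      then have "b \<in> N"
        using step.hyps(2) simple_graphD[OF graph step.hyps(2)] by auto
      then show ?thesis
        using b by blast
    next
      case False
      then have "E' b c"
        using step.hyps(2) b(1) simple_graphD[OF graph step.hyps(2)] by (auto simp: induced_def)
      then show ?thesis
        using False b(2) by (auto intro: rtranclp.rtrancl_into_rtrancl)
    qed
  qed blast
qed

lemma rtranclp_neighbour_imp_reaches:
  assumes "E\<^sup>*\<^sup>* a y" "y \<in> N"
  shows "E\<^sup>*\<^sup>* a x"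
proof -
  have "E y x"
    using assms(2) simple_graphD(4)[OF graph, of x y] by simp
  with assms(1) show ?thesis
    by (rule rtranclp.rtrancl_into_rtrancl)
qed

lemma graph_component_delete_eq:
  assumes "a \<in> V'" "\<not> E\<^sup>*\<^sup>* a x"
  shows "C' a = C a"
proof -
  have "\<not> E'\<^sup>*\<^sup>* a y" if "y \<in> N" for y
    using assms(2) rtranclp_neighbour_imp_reaches[OF rtranclp_induced that] by blast
  then show ?thesis
    using rtranclp_avoids_or_reaches_neighbour[OF assms(1)]
    by (auto simp: graph_component_def dest: rtranclp_induced)
qed

lemma graph_components_delete_vertex: "C' ` V' = (C ` V - {C x}) \<union> C' ` N"
proof (intro equalityI subsetI)
  fix X assume "X \<in> C' ` V'"
  then obtain a where a: "a \<in> V'" "X = C' a"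
    by auto
  show "X \<in> (C ` V - {C x}) \<union> C' ` N"
  proof (cases "E\<^sup>*\<^sup>* a x")
    case True
    then obtain y where "y \<in> N" "E'\<^sup>*\<^sup>* a y"
      using rtranclp_avoids_or_reaches_neighbour[OF a(1) True] by blast
    then show ?thesis
      using a graph_component_eq[OF simple_graph_delete] by auto
  next
    case False
    have "x \<in> C x" "x \<notin> C a"
      using vertex False by (simp_all add: graph_component_def)
    then have "C a \<in> C ` V - {C x}"
      using a(1) by blast
    then show ?thesis
      using a graph_component_delete_eq[OF a(1) False] by simp
  qed
next
  fix X assume X: "X \<in> (C ` V - {C x}) \<union> C' ` N"
  show "X \<in> C' ` V'"
  proof (cases "X \<in> C' ` N")
    case False
    then obtain a where a: "a \<in> V" "X = C a" "C a \<noteq> C x"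
      using X by auto
    then have "\<not> E\<^sup>*\<^sup>* a x"
      using graph_component_eq[OF graph] by auto
    then show ?thesis
      using a graph_component_delete_eq[of a] by (cases "a = x") auto
  qed (use neighbours_subset in auto)
qed

lemma graph_components_delete_vertex_disjoint: "(C ` V - {C x}) \<inter> C' ` N = {}"
proof (rule ccontr)
  assume "(C ` V - {C x}) \<inter> C' ` N \<noteq> {}"
  then obtain a y where a: "a \<in> V" "C a \<noteq> C x" "y \<in> N" "C a = C' y"
    by auto
  then have "y \<in> C a"
    using neighbours_subset by (auto simp: graph_component_def)
  then have "E\<^sup>*\<^sup>* a x"
    using rtranclp_neighbour_imp_reaches[OF _ a(3)] by (simp add: graph_component_def)
  then show False
    using a(1,2) graph_component_eq[OF graph] by auto
qed

lemma card_graph_components_delete_vertex: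
  "card (C' ` V') + 1 = card (C ` V) + card (C' ` N)"
proof -
  have fin: "finite V"
    using simple_graph_finite[OF graph] .
  have "card (C' ` V') = card (C ` V - {C x}) + card (C' ` N)"
    unfolding graph_components_delete_vertex
    using fin graph_components_delete_vertex_disjoint by (simp add: card_Un_disjoint)
  moreover have "card (C ` V - {C x}) + 1 = card (C ` V)"
    using card_Suc_Diff1[of "C ` V" "C x"] fin vertex by simp
  ultimately show ?thesis
    by simp
qed

lemma edge_set_delete_vertex: "edge_set V E = edge_set V' E' \<union> (\<lambda>y. {x, y}) ` N"
proof (intro equalityI subsetI)
  fix e assume "e \<in> edge_set V E"
  then obtain a b where e: "e = {a, b}" "a \<in> V" "b \<in> V" "E a b"
    by (auto simp: edge_set_def)
  show "e \<in> edge_set V' E' \<union> (\<lambda>y. {x, y}) ` N"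
  proof (cases "a = x \<or> b = x")
    case True
    then consider "a = x" "b \<in> N" | "b = x" "a \<in> N"
      using e simple_graphD(4)[OF graph e(4)] by blast
    then show ?thesis
      by cases (auto simp: e insert_commute)
  next
    case False
    then have "e \<in> edge_set V' E'"
      using e unfolding edge_set_def induced_def by blast
    then show ?thesis
      by blast
  qed
next
  fix e assume "e \<in> edge_set V' E' \<union> (\<lambda>y. {x, y}) ` N"
  then show "e \<in> edge_set V E"
    unfolding edge_set_def induced_def using vertex by blast
qed

lemma card_edge_set_delete_vertex: "card (edge_set V E) = card (edge_set V' E') + card N"
proof -
  have fin: "finite V"
    using simple_graph_finite[OF graph] .
  have "edge_set V' E' \<subseteq> Pow V'"
    by (auto simp: edge_set_def)
  then have "finite (edge_set V' E')"
    using fin by (meson finite_Diff finite_Pow_iff finite_subset)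
  moreover have "finite ((\<lambda>y. {x, y}) ` N)"
    using fin by simp
  moreover have "edge_set V' E' \<inter> (\<lambda>y. {x, y}) ` N = {}"
    using \<open>edge_set V' E' \<subseteq> Pow V'\<close> by blast
  ultimately have "card (edge_set V E) = card (edge_set V' E') + card ((\<lambda>y. {x, y}) ` N)"
    unfolding edge_set_delete_vertex by (rule card_Un_disjoint)
  moreover have "inj_on (\<lambda>y. {x, y}) N"
  proof (rule inj_onI)
    fix y z assume "y \<in> N" "z \<in> N" "{x, y} = {x, z}"
    then show "y = z"
      using simple_graphD(3)[OF graph] by (metis doubleton_eq_iff mem_Collect_eq)
  qed
  ultimately show ?thesis
    by (simp add: card_image)
qed

lemma cyclomatic_delete_vertex:
  "cyclomatic V' E' = cyclomatic V E - (int (card N) - int (card (C' ` N)))"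
  using card_delete_vertex card_edge_set_delete_vertex card_graph_components_delete_vertex
      num_components_eq_card_graph_components[OF graph]
      num_components_eq_card_graph_components[OF simple_graph_delete]
  by (simp add: cyclomatic_def)

lemma inj_on_graph_component_neighbours_iff: "inj_on C' N \<longleftrightarrow> \<not> on_cycle V E x"
proof -
  have "C' y = C' z \<longleftrightarrow> E'\<^sup>*\<^sup>* y z" if "y \<in> N" "z \<in> N" for y z
    using that neighbours_subset graph_component_eq[OF simple_graph_delete]
    by (auto simp: graph_component_def)
  then show ?thesis
    unfolding on_cycle_iff_neighbours_connected inj_on_def by blast
qed

lemma cyclomatic_delete_vertex_le: "cyclomatic V' E' \<le> cyclomatic V E"
  using cyclomatic_delete_vertex card_image_le[of N C'] simple_graph_finite[OF graph] by simp

lemma cyclomatic_delete_vertex_eq_iff: "cyclomatic V' E' = cyclomatic V E \<longleftrightarrow> \<not> on_cycle V E x"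
proof -
  have "finite N"
    using simple_graph_finite[OF graph] by simp
  then show ?thesis
    using cyclomatic_delete_vertex inj_on_graph_component_neighbours_iff
    by (simp add: inj_on_iff_eq_card)
qed

end

section \<open>Independence number\<close>

lemma finite_independent_set_cards:
  assumes "finite V"
  shows "finite {card S | S. independent_set V E S}"
proof (rule finite_subset)
  show "{card S | S. independent_set V E S} \<subseteq> {..card V}"
    using card_mono[OF assms] by (auto simp: independent_set_def)
qed simp

lemma card_le_indep_num: "finite V \<Longrightarrow> independent_set V E S \<Longrightarrow> card S \<le> indep_num V E"
  unfolding indep_num_def by (rule Max_ge) (auto intro: finite_independent_set_cards)

lemma maximum_independent_set_exists:
  assumes "finite V"
  obtains S where "independent_set V E S" "card S = indep_num V E"
proof -
  have "independent_set V E {}"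
    by (simp add: independent_set_def)
  then have "indep_num V E \<in> {card S | S. independent_set V E S}"
    unfolding indep_num_def by (intro Max_in finite_independent_set_cards[OF assms]) blast
  then obtain S where "indep_num V E = card S" "independent_set V E S"
    by auto
  then show thesis
    using that by simp
qed

lemma indep_num_induced_le:
  assumes "finite V" "W \<subseteq> V"
  shows "indep_num W (induced E W) \<le> indep_num V E"
proof -
  obtain S where S: "independent_set W (induced E W) S" "card S = indep_num W (induced E W)"
    using finite_subset[OF assms(2,1)] by (rule maximum_independent_set_exists)
  then have "independent_set V E S"
    using assms(2) unfolding independent_set_def induced_def by blast
  then have "card S \<le> indep_num V E"
    by (rule card_le_indep_num[OF assms(1)])
  then show ?thesis
    using S(2) by simp
qed

lemma indep_num_induced_Suc_le:
  assumes G: "simple_graph V E" and W: "W \<subseteq> V" "x \<in> V - W"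
    and no_edge: "\<And>w. w \<in> W \<Longrightarrow> \<not> E x w"
  shows "indep_num W (induced E W) + 1 \<le> indep_num V E"
proof -
  have fin: "finite V"
    using simple_graph_finite[OF G] .
  obtain S where S: "independent_set W (induced E W) S" "card S = indep_num W (induced E W)"
    using finite_subset[OF W(1) fin] by (rule maximum_independent_set_exists)
  have SW: "S \<subseteq> W"
    using S(1) by (simp add: independent_set_def)
  have "\<not> E a b" if "a \<in> insert x S" "b \<in> insert x S" for a b
  proof
    assume ab: "E a b"
    have "a \<noteq> x" "b \<noteq> x"
      using that SW no_edge ab simple_graphD(3,4)[OF G ab] by auto
    then show False
      using that S(1) SW ab by (auto simp: independent_set_def induced_def)
  qed
  then have "independent_set V E (insert x S)"
    using SW W by (auto simp: independent_set_def)
  then have "card (insert x S) \<le> indep_num V E"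
    by (rule card_le_indep_num[OF fin])
  moreover have "x \<notin> S" "finite S"
    using SW W finite_subset[OF _ fin] by auto
  ultimately show ?thesis
    using S(2) by simp
qed

lemma indep_num_le_delete_edge:
  assumes fin: "finite V" and "E u v"
  shows "indep_num V E \<le> indep_num (V - {u, v}) (induced E (V - {u, v})) + 1"
proof -
  obtain T where T: "independent_set V E T" "card T = indep_num V E"
    using fin by (rule maximum_independent_set_exists)
  have "independent_set (V - {u, v}) (induced E (V - {u, v})) (T - {u, v})"
    using T(1) by (auto simp: independent_set_def induced_def)
  then have "card (T - {u, v}) \<le> indep_num (V - {u, v}) (induced E (V - {u, v}))"
    using card_le_indep_num[of "V - {u, v}"] fin by blast
  moreover have "card T \<le> card (T - {u, v}) + 1"
  proof -
    have "u \<notin> T \<or> v \<notin> T"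
      using T(1) assms(2) by (auto simp: independent_set_def)
    then obtain w where "T - {u, v} = T - {w}"
      by blast
    then show ?thesis
      by (cases "w \<in> T") (simp_all add: card_Diff_singleton_if)
  qed
  ultimately show ?thesis
    using T(2) by simp
qed

section \<open>Deleting a pendant vertex and its neighbour\<close>

lemma pendant_neighbour_unique:
  assumes "simple_graph V E" "pendant V E u" "E u v" "E u w"
  shows "w = v"
proof -
  have "card {w \<in> V. E u w} = 1"
    using assms(2) by (simp add: pendant_def)
  then obtain y where y: "{w \<in> V. E u w} = {y}"
    by (rule card_1_singletonE)
  have "v \<in> {w \<in> V. E u w}" "w \<in> {w \<in> V. E u w}"
    using assms(3,4) simple_graphD(2)[OF assms(1)] by auto
  then show ?thesis
    unfolding y by simp
qed

locale pendant_edge =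
  fixes V :: "'a set" and E :: "'a \<Rightarrow> 'a \<Rightarrow> bool" and u v :: 'a
  assumes graph: "simple_graph V E" and edge: "E u v" and pendant: "\<And>w. E u w \<Longrightarrow> w = v"
begin

abbreviation "V0 \<equiv> V - {u, v}"
abbreviation "E0 \<equiv> induced E (V - {u, v})"

lemma endpoints: "u \<in> V" "v \<in> V" "u \<noteq> v"
  using simple_graphD[OF graph edge] by auto

lemma simple_graph_delete_pendant: "simple_graph V0 E0"
  using simple_graph_induced[OF graph] by blast

lemma card_delete_pendant: "card V = card V0 + 2"
  using endpoints simple_graph_finite[OF graph] card_Diff_subset[of "{u, v}" V]
    card_mono[of V "{u, v}"] by auto

lemma indep_num_delete_pendant: "indep_num V E = indep_num V0 E0 + 1"
proof -
  have "indep_num V0 E0 + 1 \<le> indep_num V E"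
  proof (rule indep_num_induced_Suc_le[OF graph])
    show "u \<in> V - V0"
      using endpoints by blast
    show "\<not> E u w" if "w \<in> V0" for w
      using that pendant by blast
  qed blast
  then show ?thesis
    using indep_num_le_delete_edge[of V E u v] simple_graph_finite[OF graph] edge by simp
qed

text \<open>The pendant vertex u lies on no cycle, so deleting it keeps c, and G - u - v is G - u with
  v deleted.\<close>

lemma
  shows cyclomatic_delete_pendant_le: "cyclomatic V0 E0 \<le> cyclomatic V E"
    and cyclomatic_delete_pendant_eq_iff: "cyclomatic V0 E0 = cyclomatic V E \<longleftrightarrow> \<not> on_cycle V E v"
proof -
  let ?V1 = "V - {u}" and ?E1 = "induced E (V - {u})"
  interpret delete_u: vertex_deletion V E u
    using graph endpoints(1) by unfold_locales
  interpret delete_v: vertex_deletion ?V1 ?E1 v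
    using delete_u.simple_graph_delete endpoints by unfold_locales auto
  have "{w \<in> V. E u w} = {v}"
    using endpoints edge pendant by blast
  then have u_acyclic: "\<not> on_cycle V E u"
    using delete_u.not_on_cycle_if_degree_le_1 by simp
  then have "cyclomatic ?V1 ?E1 = cyclomatic V E"
    using delete_u.cyclomatic_delete_vertex_eq_iff by simp
  moreover have "on_cycle ?V1 ?E1 v \<longleftrightarrow> on_cycle V E v"
  proof -
    have "set xs \<subseteq> ?V1" if "is_cycle V E xs" for xs
      using that u_acyclic by (auto simp: on_cycle_def is_cycle_def)
    then show ?thesis
      using is_cycle_induced_iff[of ?V1 V E] by (auto simp: on_cycle_def)
  qed
  moreover have "V0 = ?V1 - {v}" "E0 = induced ?E1 (?V1 - {v})"
    unfolding induced_induced by (auto intro: arg_cong[where f = "induced E"])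
  ultimately show "cyclomatic V0 E0 \<le> cyclomatic V E"
    and "cyclomatic V0 E0 = cyclomatic V E \<longleftrightarrow> \<not> on_cycle V E v"
    using delete_v.cyclomatic_delete_vertex_le delete_v.cyclomatic_delete_vertex_eq_iff
    by auto
qed

end

section \<open>Rank of the gain adjacency matrix\<close>

definition restrict_zero :: "'a set \<Rightarrow> ('a \<Rightarrow> complex) \<Rightarrow> 'a \<Rightarrow> complex" where
  "restrict_zero W g = (\<lambda>j. if j \<in> W then g j else 0)"

lemma module_hom_restrict_zero: "module_hom cscale cscale (restrict_zero W)"
  by unfold_locales (auto simp: restrict_zero_def cscale_def fun_eq_iff algebra_simps)

lemma dim_le_if_subset_linear_image:
  assumes f: "module_hom cscale cscale f" and "finite S" "T \<subseteq> f ` S"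
  shows "fun_cvs.dim T \<le> fun_cvs.dim S"
proof -
  obtain B where B: "B \<subseteq> S" "fun_cvs.independent B" "S \<subseteq> fun_cvs.span B" "card B = fun_cvs.dim S"
    by (rule fun_cvs.basis_exists)
  have fin: "finite B"
    using B(1) assms(2) by (rule finite_subset)
  have "T \<subseteq> fun_cvs.span (f ` B)"
    using assms(3) module_hom.spans_image[OF f B(3)] by blast
  then have "fun_cvs.dim T \<le> card (f ` B)"
    using fin by (intro fun_cvs.dim_le_card) auto
  also have "\<dots> \<le> card B"
    using fin by (rule card_image_le)
  finally show ?thesis
    using B(4) by simp
qed

lemma dim_insert_not_in_span:
  assumes "finite S" "a \<notin> fun_cvs.span S"
  shows "fun_cvs.dim (insert a S) = fun_cvs.dim S + 1"
proof -
  obtain B where B: "B \<subseteq> S" "fun_cvs.independent B" "S \<subseteq> fun_cvs.span B" "card B = fun_cvs.dim S"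
    by (rule fun_cvs.basis_exists)
  have "a \<notin> fun_cvs.span B"
    using assms(2) fun_cvs.span_mono[OF B(1)] by blast
  then have "fun_cvs.independent (insert a B)" "a \<notin> B"
    using fun_cvs.independent_insertI[OF _ B(2)] fun_cvs.span_base by auto
  moreover have "insert a S \<subseteq> fun_cvs.span (insert a B)"
    using B(3) fun_cvs.span_mono[of B "insert a B"] fun_cvs.span_base[of a "insert a B"] by blast
  ultimately have "card (insert a B) = fun_cvs.dim (insert a S)"
    using B(1) by (intro fun_cvs.basis_card_eq_dim) auto
  moreover have "finite B"
    using B(1) assms(1) by (rule finite_subset)
  ultimately show ?thesis
    using B(4) \<open>a \<notin> B\<close> by simp
qed

lemma span_vanishing_at:
  assumes "\<And>g. g \<in> S \<Longrightarrow> g p = 0" "h \<in> fun_cvs.span S"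
  shows "h p = 0"
proof -
  have "fun_cvs.subspace {g. g p = 0}"
    by (simp add: fun_cvs.subspace_def cscale_def)
  then have "fun_cvs.span S \<subseteq> {g. g p = 0}"
    using assms(1) by (intro fun_cvs.span_minimal) auto
  then show ?thesis
    using assms(2) by blast
qed

lemma adj_row_vanishing_outside: "p \<notin> V \<Longrightarrow> g \<in> adj_row V E phi ` V \<Longrightarrow> g p = 0"
  by (auto simp: adj_row_def)

lemma gain_rank_induced_le:
  assumes "finite V" "W \<subseteq> V"
  shows "gain_rank W (induced E W) phi \<le> gain_rank V E phi"
proof -
  have "adj_row W (induced E W) phi w = restrict_zero W (adj_row V E phi w)" if "w \<in> W" for w
    using that assms(2) by (auto simp: adj_row_def adj_def induced_def restrict_zero_def fun_eq_iff)
  then have "adj_row W (induced E W) phi ` W \<subseteq> restrict_zero W ` adj_row V E phi ` V"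
    using assms(2) by auto
  then show ?thesis
    unfolding gain_rank_def using assms(1)
    by (intro dim_le_if_subset_linear_image[OF module_hom_restrict_zero]) auto
qed

locale gain_pendant_edge = pendant_edge +
  fixes phi :: "'a \<Rightarrow> 'a \<Rightarrow> complex"
  assumes gain_nonzero: "\<And>a b. E a b \<Longrightarrow> phi a b \<noteq> 0"
begin

abbreviation "R \<equiv> adj_row V E phi"
abbreviation "R0 \<equiv> adj_row (V - {u, v}) (induced E (V - {u, v})) phi"
abbreviation "e\<^sub>v \<equiv> indicator {v} :: 'a \<Rightarrow> complex"

lemma adj_row_pendant: "R u = cscale (phi u v) e\<^sub>v"
proof
  fix j
  have "E u j \<longleftrightarrow> j = v"
    using edge pendant by blast
  then show "R u j = cscale (phi u v) e\<^sub>v j"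
    using endpoints by (auto simp: adj_row_def adj_def cscale_def)
qed

lemma adj_row_delete_pendant:
  assumes "w \<in> V0"
  shows "R w = cscale (adj E phi w v) e\<^sub>v + R0 w"
proof
  fix j
  have "\<not> E w u"
    using assms pendant simple_graphD(4)[OF graph, of w u] by blast
  then show "R w j = (cscale (adj E phi w v) e\<^sub>v + R0 w) j"
    using assms endpoints
    by (cases "j = v") (auto simp: adj_row_def adj_def induced_def cscale_def)
qed

lemma adj_rows_subset_span_pendant:
  "R ` V \<subseteq> fun_cvs.span (insert e\<^sub>v (insert (R v) (R0 ` V0)))" (is "_ \<subseteq> fun_cvs.span ?T")
proof
  fix r assume "r \<in> R ` V"
  then obtain w where w: "w \<in> V" "r = R w"
    by blast
  have e_T: "e\<^sub>v \<in> fun_cvs.span ?T"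
    by (simp add: fun_cvs.span_base)
  consider "w = u" | "w = v" | "w \<in> V0"
    using w by auto
  then show "r \<in> fun_cvs.span ?T"
  proof cases
    case 1
    then show ?thesis
      using w adj_row_pendant fun_cvs.span_scale[OF e_T] by simp
  next
    case 2
    then show ?thesis
      using w by (simp add: fun_cvs.span_base)
  next
    case 3
    then have "R0 w \<in> fun_cvs.span ?T"
      by (simp add: fun_cvs.span_base)
    then show ?thesis
      using w adj_row_delete_pendant[OF 3] fun_cvs.span_add[OF fun_cvs.span_scale[OF e_T]] by simp
  qed
qed

lemma pendant_generators_subset_span_adj_rows:
  "insert e\<^sub>v (insert (R v) (R0 ` V0)) \<subseteq> fun_cvs.span (R ` V)" (is "_ \<subseteq> fun_cvs.span ?S")
proof -
  have "R u \<in> fun_cvs.span ?S" "R v \<in> fun_cvs.span ?S"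
    using endpoints by (simp_all add: fun_cvs.span_base)
  moreover have "e\<^sub>v = cscale (inverse (phi u v)) (R u)"
    using adj_row_pendant gain_nonzero[OF edge] by (simp add: cscale_def fun_eq_iff)
  ultimately have e_S: "e\<^sub>v \<in> fun_cvs.span ?S"
    using fun_cvs.span_scale[of "R u" ?S "inverse (phi u v)"] by simp
  have "R0 w \<in> fun_cvs.span ?S" if "w \<in> V0" for w
  proof -
    have "R0 w = R w - cscale (adj E phi w v) e\<^sub>v"
      using adj_row_delete_pendant[OF that] by simp
    moreover have "R w \<in> fun_cvs.span ?S"
      using that by (simp add: fun_cvs.span_base)
    ultimately show ?thesis
      using fun_cvs.span_diff[OF _ fun_cvs.span_scale[OF e_S]] by simp
  qed
  then show ?thesis
    using e_S \<open>R v \<in> fun_cvs.span ?S\<close> by blast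
qed

text \<open>All rows of G - {u, v} vanish at u and v, whereas the row of v does not vanish at u.\<close>

lemma gain_rank_delete_pendant: "gain_rank V E phi = gain_rank V0 E0 phi + 2"
proof -
  let ?S0 = "R0 ` V0"
  have fin: "finite ?S0"
    using simple_graph_finite[OF graph] by simp
  have "g p = 0" if "g \<in> fun_cvs.span ?S0" "p \<notin> V0" for g p
    using span_vanishing_at[of ?S0 p g] adj_row_vanishing_outside[of p V0] that by blast
  then have vanish: "g u = 0" "g v = 0" if "g \<in> fun_cvs.span ?S0" for g
    using that by auto
  have Rv_u: "R v u \<noteq> 0"
    using endpoints gain_nonzero simple_graphD(4)[OF graph edge]
    by (simp add: adj_row_def adj_def)
  then have Rv: "R v \<notin> fun_cvs.span ?S0"
    using vanish by blast
  have "e\<^sub>v \<notin> fun_cvs.span (insert (R v) ?S0)"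
  proof
    assume "e\<^sub>v \<in> fun_cvs.span (insert (R v) ?S0)"
    then obtain k where k: "e\<^sub>v - cscale k (R v) \<in> fun_cvs.span ?S0"
      unfolding fun_cvs.span_breakdown_eq by blast
    then have "k = 0"
      using vanish(1)[OF k] endpoints Rv_u by (simp add: cscale_def)
    then show False
      using vanish(2)[OF k] by (simp add: cscale_def)
  qed
  then have "fun_cvs.dim (insert e\<^sub>v (insert (R v) ?S0)) = fun_cvs.dim ?S0 + 2"
    using dim_insert_not_in_span[OF finite_insert[THEN iffD2, OF fin]]
      dim_insert_not_in_span[OF fin Rv] by simp
  moreover have "fun_cvs.dim (R ` V) = fun_cvs.dim (insert e\<^sub>v (insert (R v) ?S0))"
    using adj_rows_subset_span_pendant pendant_generators_subset_span_adj_rows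
    by (intro fun_cvs.span_eq_dim) (simp add: fun_cvs.span_eq)
  ultimately show ?thesis
    unfolding gain_rank_def by simp
qed

end

section \<open>The lower bound and the equality case\<close>

definition rank_lower_bound :: "'a set \<Rightarrow> ('a \<Rightarrow> 'a \<Rightarrow> bool) \<Rightarrow> int" where
  "rank_lower_bound V E = 2 * int (card V) - 2 * cyclomatic V E - 2 * int (indep_num V E)"

lemma (in vertex_deletion) rank_lower_bound_le_delete_on_cycle:
  assumes "on_cycle V E x"
  shows "rank_lower_bound V E \<le> rank_lower_bound V' E'"
proof -
  have "cyclomatic V' E' < cyclomatic V E"
    using assms cyclomatic_delete_vertex_le cyclomatic_delete_vertex_eq_iff by fastforce
  moreover have "indep_num V' E' \<le> indep_num V E"
    using indep_num_induced_le[OF simple_graph_finite[OF graph]] by blast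
  ultimately show ?thesis
    using card_delete_vertex by (simp add: rank_lower_bound_def)
qed

lemma (in vertex_deletion) rank_lower_bound_le_delete_isolated:
  assumes "N = {}"
  shows "rank_lower_bound V E \<le> rank_lower_bound V' E'"
proof -
  have "\<not> on_cycle V E x"
    by (rule not_on_cycle_if_degree_le_1) (simp add: assms)
  then have "cyclomatic V' E' = cyclomatic V E"
    using cyclomatic_delete_vertex_eq_iff by simp
  moreover have "indep_num V' E' + 1 \<le> indep_num V E"
  proof (rule indep_num_induced_Suc_le[OF graph])
    show "\<not> E x w" if "w \<in> V'" for w
      using assms that by blast
  qed (use vertex in auto)
  ultimately show ?thesis
    using card_delete_vertex by (simp add: rank_lower_bound_def)
qed

lemma (in pendant_edge) rank_lower_bound_delete_pendant:
  "rank_lower_bound V E = rank_lower_bound V0 E0 + 2 - 2 * (cyclomatic V E - cyclomatic V0 E0)"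
  using card_delete_pendant indep_num_delete_pendant by (simp add: rank_lower_bound_def)

lemma (in pendant_edge) rank_lower_bound_le_delete_pendant:
  "rank_lower_bound V E \<le> rank_lower_bound V0 E0 + 2"
  using rank_lower_bound_delete_pendant cyclomatic_delete_pendant_le by simp

lemma (in gain_pendant_edge) rank_lower_bound_le_gain_rank_if_delete_pendant:
  assumes "rank_lower_bound V0 E0 \<le> int (gain_rank V0 E0 phi)"
  shows "rank_lower_bound V E \<le> int (gain_rank V E phi)"
  using assms rank_lower_bound_le_delete_pendant gain_rank_delete_pendant by simp

theorem gain_rank_ge_rank_lower_bound:
  assumes "simple_graph V E" and "\<And>a b. E a b \<Longrightarrow> phi a b \<noteq> 0"
  shows "rank_lower_bound V E \<le> int (gain_rank V E phi)"
  using assms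
proof (induction "card V" arbitrary: V E rule: less_induct)
  case less
  note G = less.prems(1) and gain_nonzero = less.prems(2)
  have fin: "finite V"
    using simple_graph_finite[OF G] .
  have IH: "rank_lower_bound W (induced E W) \<le> int (gain_rank W (induced E W) phi)"
    if "W \<subseteq> V" "card W < card V" for W
  proof (rule less.hyps[OF that(2) simple_graph_induced[OF G that(1)]])
    show "phi a b \<noteq> 0" if "induced E W a b" for a b
      using that gain_nonzero by (simp add: induced_def)
  qed
  show ?case
  proof (cases "V = {}")
    case True
    then show ?thesis
      by (simp add: rank_lower_bound_def cyclomatic_empty)
  next
    case False
    then obtain x where x_choice: "x \<in> V" "on_cycle V E x \<or> card {w \<in> V. E x w} \<le> 1"
      using vertex_on_cycle_or_degree_le_1[OF G] by metis
    interpret vertex_deletion V E x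
      using G x_choice(1) by unfold_locales
    have delete_x: "rank_lower_bound V E \<le> int (gain_rank V E phi)"
      if "rank_lower_bound V E \<le> rank_lower_bound V' E'"
    proof -
      note that
      also have "rank_lower_bound V' E' \<le> int (gain_rank V' E' phi)"
        using IH[of V'] card_delete_vertex by simp
      also have "\<dots> \<le> int (gain_rank V E phi)"
        using gain_rank_induced_le[OF fin] by simp
      finally show ?thesis .
    qed
    consider "on_cycle V E x" | "N = {}" | y where "E x y" "\<And>w. E x w \<Longrightarrow> w = y"
    proof (cases "on_cycle V E x")
      case True
      then show thesis
        by (rule that(1))
    next
      case False
      then have "card N \<le> 1"
        using x_choice(2) by simp
      then show thesis
        using that(2,3) by (rule degree_le_1_cases)
    qed
    then show ?thesis
    proof cases
      case 1
      then show ?thesis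
        using delete_x rank_lower_bound_le_delete_on_cycle by blast
    next
      case 2
      then show ?thesis
        using delete_x rank_lower_bound_le_delete_isolated by blast
    next
      case (3 y)
      interpret P: gain_pendant_edge V E x y phi
        using G 3 gain_nonzero by unfold_locales
      show ?thesis
        using IH[of P.V0] P.card_delete_pendant
        by (intro P.rank_lower_bound_le_gain_rank_if_delete_pendant) simp
    qed
  qed
qed

theorem lemma4p6:
  fixes V :: "'a set" and E :: "'a \<Rightarrow> 'a \<Rightarrow> bool" and phi :: "'a \<Rightarrow> 'a \<Rightarrow> complex"
    and u v :: 'a
  assumes "cug_graph V E phi"
    and "pendant V E u" and "E u v"
  defines "V0 \<equiv> V - {u, v}"
  defines "E0 \<equiv> induced E V0"
  shows "int (gain_rank V E phi) = 2 * int (card V) - 2 * cyclomatic V E - 2 * int (indep_num V E)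
     \<longleftrightarrow> (\<not> on_cycle V E v \<and>
          int (gain_rank V0 E0 phi) = 2 * int (card V0) - 2 * cyclomatic V0 E0 - 2 * int (indep_num V0 E0))"
proof -
  have G: "simple_graph V E"
    using assms(1) by (rule cug_graph_simple_graph)
  have gain_nonzero: "\<And>a b. E a b \<Longrightarrow> phi a b \<noteq> 0"
    using cug_graph_gain_nonzero[OF assms(1)] .
  interpret P: gain_pendant_edge V E u v phi
    using G assms(3) pendant_neighbour_unique[OF G assms(2,3)] gain_nonzero by unfold_locales
  have "rank_lower_bound V0 E0 \<le> int (gain_rank V0 E0 phi)"
    unfolding V0_def E0_def using P.simple_graph_delete_pendant gain_nonzero
    by (intro gain_rank_ge_rank_lower_bound) (auto simp: induced_def)
  then show ?thesis
    unfolding rank_lower_bound_def[symmetric] V0_def E0_def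
    using P.gain_rank_delete_pendant P.rank_lower_bound_delete_pendant
      P.cyclomatic_delete_pendant_le P.cyclomatic_delete_pendant_eq_iff
    by (cases "on_cycle V E v") auto
qed

end
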